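(* Let $p\in\{1,2\}$, let $\Omega\subset\mathbb{R}^n$ be a domain, $\mathcal{S}$ any basis of shapes in $\Omega$, $S\in\mathcal{S}$, and $f_1,f_2$ real-valued functions in $\mathrm{BMO}^p_{\mathcal{S}}(\Omega)$. If $f=\max(f_1,f_2)$ or $f=\min(f_1,f_2)$, then $$\frac1{|S|}\int_S|f-f_S|^p\le\frac1{|S|}\int_S|f_1-(f_1)_S|^p+\frac1{|S|}\int_S|f_2-(f_2)_S|^p.$$ Consequently $\|\max(f_1,f_2)\|_{\mathrm{BMO}^p_{\mathcal{S}}}\le\|f_1\|_{\mathrm{BMO}^p_{\mathcal{S}}}+\|f_2\|_{\mathrm{BMO}^p_{\mathcal{S}}}$ and $\|\min(f_1,f_2)\|_{\mathrm{BMO}^p_{\mathcal{S}}}\le\|f_1\|_{\mathrm{BMO}^p_{\mathcal{S}}}+\|f_2\|_{\mathrm{BMO}^p_{\mathcal{S}}}$.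
   Context: A domain is an open connected set. A shape is an open set with $0<|S|<\infty$; a basis of shapes in $\Omega$ is a collection of shapes contained in $\Omega$ covering $\Omega$. For $f\in L^1(S)$, $f_S=\frac1{|S|}\int_Sf$. $\mathrm{BMO}^p_{\mathcal{S}}(\Omega)$ is the space of $f$ with $f\in L^1(S)$ for all $S\in\mathcal{S}$ and $\|f\|_{\mathrm{BMO}^p_{\mathcal{S}}}:=\sup_{S\in\mathcal{S}}\big(\frac1{|S|}\int_S|f-f_S|^p\big)^{1/p}<\infty$. *)

theory Defs
  imports "HOL-Analysis.Analysis"
begin

definition domain :: "'a::topological_space set \<Rightarrow> bool" where
  "domain \<Omega> \<longleftrightarrow> open \<Omega> \<and> connected \<Omega>"

definition shape :: "'a::euclidean_space set \<Rightarrow> bool" where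
  "shape S \<longleftrightarrow> open S \<and> 0 < emeasure lebesgue S \<and> emeasure lebesgue S < \<infinity>"

definition basis_of_shapes :: "'a::euclidean_space set \<Rightarrow> 'a set set \<Rightarrow> bool" where
  "basis_of_shapes \<Omega> \<S> \<longleftrightarrow> (\<forall>S\<in>\<S>. shape S \<and> S \<subseteq> \<Omega>) \<and> \<Union>\<S> = \<Omega>"

definition avg :: "'a::euclidean_space set \<Rightarrow> ('a \<Rightarrow> real) \<Rightarrow> real" where
  "avg S f = (LINT x:S|lebesgue. f x) / measure lebesgue S"

definition mean_osc :: "real \<Rightarrow> 'a::euclidean_space set \<Rightarrow> ('a \<Rightarrow> real) \<Rightarrow> real" where
  "mean_osc p S f = avg S (\<lambda>x. \<bar>f x - avg S f\<bar> powr p)"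

definition in_BMO :: "real \<Rightarrow> 'a::euclidean_space set set \<Rightarrow> ('a \<Rightarrow> real) \<Rightarrow> bool" where
  "in_BMO p \<S> f \<longleftrightarrow>
     (\<forall>S\<in>\<S>. set_integrable lebesgue S f
              \<and> set_integrable lebesgue S (\<lambda>x. \<bar>f x - avg S f\<bar> powr p))
     \<and> bdd_above ((\<lambda>S. mean_osc p S f) ` \<S>)"

definition BMO_norm :: "real \<Rightarrow> 'a::euclidean_space set set \<Rightarrow> ('a \<Rightarrow> real) \<Rightarrow> real" where
  "BMO_norm p \<S> f = (SUP S\<in>\<S>. mean_osc p S f) powr (1 / p)"

end

theory Submission
  imports Defs
begin

text \<open>Both inequalities are pointwise comparisons after a suitable choice of constants.
  For \<open>p = 1\<close>: a function with mean zero has \<open>\<integral>|W| = 2\<integral>W\<^sup>+\<close>, and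
  \<open>(max f\<^sub>1 f\<^sub>2 - m)\<^sup>+ \<le> (f\<^sub>1 - a\<^sub>1)\<^sup>+ + (f\<^sub>2 - a\<^sub>2)\<^sup>+\<close> because the averages \<open>a\<^sub>i\<close> of \<open>f\<^sub>i\<close> are
  at most the average \<open>m\<close> of \<open>max f\<^sub>1 f\<^sub>2\<close>. For \<open>p = 2\<close>: the average minimises the mean
  squared deviation, so one may replace \<open>m\<close> by \<open>max a\<^sub>1 a\<^sub>2\<close>, and
  \<open>|max f\<^sub>1 f\<^sub>2 - max a\<^sub>1 a\<^sub>2| \<le> max |f\<^sub>1 - a\<^sub>1| |f\<^sub>2 - a\<^sub>2|\<close>. The case of \<open>min\<close> follows by
  negation, and the seminorm bounds from \<open>sqrt (A + B) \<le> sqrt A + sqrt B\<close>.\<close>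

definition average :: "'a measure \<Rightarrow> ('a \<Rightarrow> real) \<Rightarrow> real" where
  "average M f = integral\<^sup>L M f / measure M (space M)"

definition oscillation :: "real \<Rightarrow> 'a measure \<Rightarrow> ('a \<Rightarrow> real) \<Rightarrow> real" where
  "oscillation p M f = average M (\<lambda>x. \<bar>f x - average M f\<bar> powr p)"

lemma average_uminus: "average M (\<lambda>x. - f x) = - average M f"
  by (simp add: average_def)

lemma oscillation_uminus: "oscillation p M (\<lambda>x. - f x) = oscillation p M f"
  unfolding oscillation_def average_uminus by (simp add: abs_minus_commute)

lemma integral_abs_eq_twice_integral_pos_part:
  fixes W :: "'a \<Rightarrow> real"
  assumes "integrable M W" "integral\<^sup>L M W = 0"
  shows "(\<integral>x. \<bar>W x\<bar> \<partial>M) = 2 * (\<integral>x. max (W x) 0 \<partial>M)"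
proof -
  have "(\<integral>x. \<bar>W x\<bar> \<partial>M) = (\<integral>x. 2 * max (W x) 0 - W x \<partial>M)"
    by (rule Bochner_Integration.integral_cong) auto
  also have "\<dots> = 2 * (\<integral>x. max (W x) 0 \<partial>M) - integral\<^sup>L M W"
    using assms(1) by simp
  finally show ?thesis using assms(2) by simp
qed

lemma abs_max_diff_max_le: "\<bar>max x y - max a b\<bar> \<le> max \<bar>x - a\<bar> \<bar>y - (b::real)\<bar>"
  by (auto simp: max_def)

context finite_measure
begin

lemma average_mono:
  assumes "integrable M f" "integrable M g" "\<And>x. f x \<le> g x"
  shows "average M f \<le> average M g"
  unfolding average_def using assms by (intro divide_right_mono integral_mono) auto

lemma integral_diff_average:
  assumes "integrable M f" "0 < measure M (space M)"
  shows "(\<integral>x. f x - average M f \<partial>M) = 0"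
  using assms by (simp add: average_def)

lemma integral_abs_diff_average_max_le:
  fixes f g :: "'a \<Rightarrow> real"
  assumes pos: "0 < measure M (space M)" and f: "integrable M f" and g: "integrable M g"
  defines "h \<equiv> \<lambda>x. max (f x) (g x)"
  shows "(\<integral>x. \<bar>h x - average M h\<bar> \<partial>M)
    \<le> (\<integral>x. \<bar>f x - average M f\<bar> \<partial>M) + (\<integral>x. \<bar>g x - average M g\<bar> \<partial>M)"
proof -
  have h: "integrable M h" unfolding h_def using f g by auto
  have abs_eq: "(\<integral>x. \<bar>u x - average M u\<bar> \<partial>M) = 2 * (\<integral>x. max (u x - average M u) 0 \<partial>M)"
    if "integrable M u" for u
    using that integral_diff_average[OF that pos]
    by (intro integral_abs_eq_twice_integral_pos_part) auto
  have "average M f \<le> average M h" "average M g \<le> average M h"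
    using f g h by (auto intro!: average_mono simp: h_def)
  then have "(\<integral>x. max (h x - average M h) 0 \<partial>M)
      \<le> (\<integral>x. max (f x - average M f) 0 + max (g x - average M g) 0 \<partial>M)"
    using f g h by (intro integral_mono) (auto simp: h_def)
  also have "\<dots> = (\<integral>x. max (f x - average M f) 0 \<partial>M) + (\<integral>x. max (g x - average M g) 0 \<partial>M)"
    using f g by (intro Bochner_Integration.integral_add) auto
  finally show ?thesis using abs_eq[OF f] abs_eq[OF g] abs_eq[OF h] by simp
qed

lemma integral_square_diff_average_le:
  fixes f :: "'a \<Rightarrow> real"
  assumes pos: "0 < measure M (space M)" and f: "integrable M f"
    and fc: "integrable M (\<lambda>x. (f x - c)\<^sup>2)"
  shows "(\<integral>x. (f x - average M f)\<^sup>2 \<partial>M) \<le> (\<integral>x. (f x - c)\<^sup>2 \<partial>M)"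
proof -
  define m where "m = average M f"
  have "(f x - m)\<^sup>2 = (f x - c)\<^sup>2 - 2 * (m - c) * (f x - m) - (m - c)\<^sup>2" for x
    by (simp add: power2_eq_square algebra_simps)
  then have "(\<integral>x. (f x - m)\<^sup>2 \<partial>M)
      = (\<integral>x. (f x - c)\<^sup>2 \<partial>M) - 2 * (m - c) * (\<integral>x. f x - m \<partial>M) - (m - c)\<^sup>2 * measure M (space M)"
    using f fc by simp
  also have "\<dots> = (\<integral>x. (f x - c)\<^sup>2 \<partial>M) - (m - c)\<^sup>2 * measure M (space M)"
    using integral_diff_average[OF f pos] by (simp add: m_def)
  finally show ?thesis using pos by (simp add: m_def)
qed

lemma integral_square_diff_average_max_le:
  fixes f g :: "'a \<Rightarrow> real"
  assumes pos: "0 < measure M (space M)" and f: "integrable M f" and g: "integrable M g"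
    and f2: "integrable M (\<lambda>x. (f x - average M f)\<^sup>2)"
    and g2: "integrable M (\<lambda>x. (g x - average M g)\<^sup>2)"
  defines "h \<equiv> \<lambda>x. max (f x) (g x)"
  shows "(\<integral>x. (h x - average M h)\<^sup>2 \<partial>M)
    \<le> (\<integral>x. (f x - average M f)\<^sup>2 \<partial>M) + (\<integral>x. (g x - average M g)\<^sup>2 \<partial>M)"
proof -
  define c where "c = max (average M f) (average M g)"
  have bound: "(h x - c)\<^sup>2 \<le> (f x - average M f)\<^sup>2 + (g x - average M g)\<^sup>2" for x
  proof -
    have "\<bar>h x - c\<bar> \<le> max \<bar>f x - average M f\<bar> \<bar>g x - average M g\<bar>"
      unfolding h_def c_def by (rule abs_max_diff_max_le)
    then have "\<bar>h x - c\<bar>\<^sup>2 \<le> (max \<bar>f x - average M f\<bar> \<bar>g x - average M g\<bar>)\<^sup>2"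
      by (rule power_mono) simp
    also have "\<dots> \<le> (f x - average M f)\<^sup>2 + (g x - average M g)\<^sup>2"
      by (cases "\<bar>f x - average M f\<bar> \<le> \<bar>g x - average M g\<bar>") (auto simp: max_def)
    finally show ?thesis by simp
  qed
  have h: "integrable M h" unfolding h_def using f g by auto
  have hc: "integrable M (\<lambda>x. (h x - c)\<^sup>2)"
  proof (rule Bochner_Integration.integrable_bound[OF Bochner_Integration.integrable_add[OF f2 g2]])
    show "(\<lambda>x. (h x - c)\<^sup>2) \<in> borel_measurable M" using h by measurable
    show "AE x in M. norm ((h x - c)\<^sup>2) \<le> norm ((f x - average M f)\<^sup>2 + (g x - average M g)\<^sup>2)"
      using bound by (auto intro!: AE_I2)
  qed
  have "(\<integral>x. (h x - average M h)\<^sup>2 \<partial>M) \<le> (\<integral>x. (h x - c)\<^sup>2 \<partial>M)"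
    by (rule integral_square_diff_average_le[OF pos h hc])
  also have "\<dots> \<le> (\<integral>x. (f x - average M f)\<^sup>2 + (g x - average M g)\<^sup>2 \<partial>M)"
    using hc f2 g2 bound by (intro integral_mono) auto
  finally show ?thesis using f2 g2 by simp
qed

lemma oscillation_max_le:
  fixes f g :: "'a \<Rightarrow> real"
  assumes "p \<in> {1, 2}" "0 < measure M (space M)" "integrable M f" "integrable M g"
    "integrable M (\<lambda>x. \<bar>f x - average M f\<bar> powr p)"
    "integrable M (\<lambda>x. \<bar>g x - average M g\<bar> powr p)"
  shows "oscillation p M (\<lambda>x. max (f x) (g x)) \<le> oscillation p M f + oscillation p M g"
proof -
  have "(\<integral>x. \<bar>max (f x) (g x) - average M (\<lambda>x. max (f x) (g x))\<bar> powr p \<partial>M)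
      \<le> (\<integral>x. \<bar>f x - average M f\<bar> powr p \<partial>M) + (\<integral>x. \<bar>g x - average M g\<bar> powr p \<partial>M)"
    using assms integral_abs_diff_average_max_le integral_square_diff_average_max_le by auto
  then show ?thesis
    unfolding oscillation_def average_def[of _ "\<lambda>x. \<bar>_ x - _\<bar> powr p"]
    using assms(2) by (simp add: add_divide_distrib[symmetric] divide_right_mono)
qed

lemma oscillation_min_le:
  fixes f g :: "'a \<Rightarrow> real"
  assumes "p \<in> {1, 2}" "0 < measure M (space M)" "integrable M f" "integrable M g"
    "integrable M (\<lambda>x. \<bar>f x - average M f\<bar> powr p)"
    "integrable M (\<lambda>x. \<bar>g x - average M g\<bar> powr p)"
  shows "oscillation p M (\<lambda>x. min (f x) (g x)) \<le> oscillation p M f + oscillation p M g"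
proof -
  have "oscillation p M (\<lambda>x. max (- f x) (- g x))
      \<le> oscillation p M (\<lambda>x. - f x) + oscillation p M (\<lambda>x. - g x)"
    using assms by (intro oscillation_max_le) (simp_all add: average_uminus abs_minus_commute)
  moreover have "(\<lambda>x. min (f x) (g x)) = (\<lambda>x. - max (- f x) (- g x))" by auto
  ultimately show ?thesis by (simp only: oscillation_uminus)
qed

end

lemma shape_restrict_space_lebesgue:
  assumes "shape S"
  shows "finite_measure (restrict_space lebesgue S)"
    and "0 < measure (restrict_space lebesgue S) (space (restrict_space lebesgue S))"
proof -
  have S: "S \<in> sets lebesgue" and pos: "0 < emeasure lebesgue S" and fin: "emeasure lebesgue S < \<infinity>"
    using assms by (auto simp: shape_def)
  show "finite_measure (restrict_space lebesgue S)"
    using S fin by (intro finite_measureI) (simp add: emeasure_restrict_space space_restrict_space)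
  have "measure (restrict_space lebesgue S) (space (restrict_space lebesgue S)) = measure lebesgue S"
    using S measure_restrict_space[of S lebesgue S] by (simp add: space_restrict_space)
  also have "0 < measure lebesgue S"
    using pos fin by (simp add: measure_def enn2real_positive_iff)
  finally show "0 < measure (restrict_space lebesgue S) (space (restrict_space lebesgue S))" .
qed

lemma avg_eq_average_restrict_space:
  "S \<in> sets lebesgue \<Longrightarrow> avg S f = average (restrict_space lebesgue S) f"
  by (simp add: avg_def average_def set_lebesgue_integral_def integral_restrict_space
      measure_restrict_space space_restrict_space)

lemma mean_osc_eq_oscillation_restrict_space:
  "S \<in> sets lebesgue \<Longrightarrow> mean_osc p S f = oscillation p (restrict_space lebesgue S) f"
  by (simp add: mean_osc_def oscillation_def avg_eq_average_restrict_space)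

text \<open>No integrability is needed: a non-integrable function has Bochner integral \<open>0\<close>.\<close>
lemma mean_osc_nonneg: "0 \<le> mean_osc p S f"
  unfolding mean_osc_def avg_def set_lebesgue_integral_def
  by (intro divide_nonneg_nonneg integral_nonneg_AE) auto

lemma mean_osc_max_min_le:
  assumes p: "p \<in> {1, 2}" and S: "shape S"
    and f: "set_integrable lebesgue S f" "set_integrable lebesgue S (\<lambda>x. \<bar>f x - avg S f\<bar> powr p)"
    and g: "set_integrable lebesgue S g" "set_integrable lebesgue S (\<lambda>x. \<bar>g x - avg S g\<bar> powr p)"
  shows "mean_osc p S (\<lambda>x. max (f x) (g x)) \<le> mean_osc p S f + mean_osc p S g"
    and "mean_osc p S (\<lambda>x. min (f x) (g x)) \<le> mean_osc p S f + mean_osc p S g"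
proof -
  have Ssets: "S \<in> sets lebesgue" using S by (simp add: shape_def)
  interpret finite_measure "restrict_space lebesgue S"
    using S by (rule shape_restrict_space_lebesgue)
  note pos = shape_restrict_space_lebesgue(2)[OF S]
  have restrict: "set_integrable lebesgue S u \<longleftrightarrow> integrable (restrict_space lebesgue S) u" for u :: "_ \<Rightarrow> real"
    unfolding set_integrable_def using Ssets by (simp add: integrable_restrict_space)
  note f' = f[unfolded restrict avg_eq_average_restrict_space[OF Ssets]]
    and g' = g[unfolded restrict avg_eq_average_restrict_space[OF Ssets]]
  show "mean_osc p S (\<lambda>x. max (f x) (g x)) \<le> mean_osc p S f + mean_osc p S g"
    using oscillation_max_le[OF p pos f'(1) g'(1) f'(2) g'(2)]
    by (simp add: mean_osc_eq_oscillation_restrict_space[OF Ssets])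
  show "mean_osc p S (\<lambda>x. min (f x) (g x)) \<le> mean_osc p S f + mean_osc p S g"
    using oscillation_min_le[OF p pos f'(1) g'(1) f'(2) g'(2)]
    by (simp add: mean_osc_eq_oscillation_restrict_space[OF Ssets])
qed

lemma add_powr_inverse_le:
  fixes a b p :: real
  assumes "p \<in> {1, 2}" "0 \<le> a" "0 \<le> b"
  shows "(a + b) powr (1 / p) \<le> a powr (1 / p) + b powr (1 / p)"
  using assms sqrt_add_le_add_sqrt[of a b] by (auto simp: powr_half_sqrt)

lemma BMO_norm_le_add:
  assumes p: "p \<in> {1, 2}" and ne: "\<S> \<noteq> {}"
    and f: "bdd_above ((\<lambda>S. mean_osc p S f) ` \<S>)" and g: "bdd_above ((\<lambda>S. mean_osc p S g) ` \<S>)"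
    and le: "\<And>S. S \<in> \<S> \<Longrightarrow> mean_osc p S h \<le> mean_osc p S f + mean_osc p S g"
  shows "BMO_norm p \<S> h \<le> BMO_norm p \<S> f + BMO_norm p \<S> g"
proof -
  obtain S0 where S0: "S0 \<in> \<S>" using ne by blast
  define A where "A = (SUP S\<in>\<S>. mean_osc p S f)"
  define B where "B = (SUP S\<in>\<S>. mean_osc p S g)"
  have "0 \<le> A" "0 \<le> B"
    unfolding A_def B_def using f g S0 mean_osc_nonneg by (auto intro: cSUP_upper2)
  have h: "mean_osc p S h \<le> A + B" if "S \<in> \<S>" for S
    using le[OF that] cSUP_upper[OF that f] cSUP_upper[OF that g] by (simp add: A_def B_def)
  then have "bdd_above ((\<lambda>S. mean_osc p S h) ` \<S>)"
    by (intro bdd_aboveI2)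
  then have "0 \<le> (SUP S\<in>\<S>. mean_osc p S h)"
    using S0 mean_osc_nonneg by (intro cSUP_upper2)
  moreover have "(SUP S\<in>\<S>. mean_osc p S h) \<le> A + B"
    using ne h by (intro cSUP_least)
  ultimately have "BMO_norm p \<S> h \<le> (A + B) powr (1 / p)"
    using p unfolding BMO_norm_def by (intro powr_mono2) auto
  also have "\<dots> \<le> BMO_norm p \<S> f + BMO_norm p \<S> g"
    unfolding BMO_norm_def A_def[symmetric] B_def[symmetric]
    using p \<open>0 \<le> A\<close> \<open>0 \<le> B\<close> by (rule add_powr_inverse_le)
  finally show ?thesis .
qed

theorem proposition6p2:
  fixes p :: real and \<Omega> :: "(real ^ 'n) set" and \<S> :: "(real ^ 'n) set set"
    and S :: "(real ^ 'n) set" and f1 f2 :: "real ^ 'n \<Rightarrow> real"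
  assumes "p \<in> {1, 2}"
    and "domain \<Omega>"
    and "basis_of_shapes \<Omega> \<S>"
    and "S \<in> \<S>"
    and "in_BMO p \<S> f1" and "in_BMO p \<S> f2"
  shows "mean_osc p S (\<lambda>x. max (f1 x) (f2 x)) \<le> mean_osc p S f1 + mean_osc p S f2
       \<and> mean_osc p S (\<lambda>x. min (f1 x) (f2 x)) \<le> mean_osc p S f1 + mean_osc p S f2
       \<and> BMO_norm p \<S> (\<lambda>x. max (f1 x) (f2 x)) \<le> BMO_norm p \<S> f1 + BMO_norm p \<S> f2
       \<and> BMO_norm p \<S> (\<lambda>x. min (f1 x) (f2 x)) \<le> BMO_norm p \<S> f1 + BMO_norm p \<S> f2"
proof -
  have osc: "mean_osc p T (\<lambda>x. max (f1 x) (f2 x)) \<le> mean_osc p T f1 + mean_osc p T f2"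
    "mean_osc p T (\<lambda>x. min (f1 x) (f2 x)) \<le> mean_osc p T f1 + mean_osc p T f2"
    if "T \<in> \<S>" for T
    using assms(1,3,5,6) that
    by (auto simp: basis_of_shapes_def in_BMO_def intro!: mean_osc_max_min_le)
  have "\<S> \<noteq> {}" using assms(4) by blast
  then show ?thesis
    using assms(1,4-6) osc
    by (auto simp: in_BMO_def intro!: BMO_norm_le_add)
qed

end
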